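(* Assume (A1)–(A4). For all $\boldsymbol y\in U$ and $\boldsymbol\nu\in\mathscr F$, $$\|\partial_{\boldsymbol y}^{\boldsymbol\nu}\det J(\cdot,\boldsymbol y)\|_{L^\infty(D_{\rm ref})}\le d!\,(2+\xi_{\boldsymbol b})^d(2\pi)^{|\boldsymbol\nu|}\sum_{\boldsymbol w\le\boldsymbol\nu}|\boldsymbol w|!\,\boldsymbol b^{\boldsymbol w}\prod_{i\ge1}S(\nu_i,w_i).$$
   Context: Setting. Let $d\in\{2,3\}$, let $D_{\rm ref}\subset\mathbb R^d$ be a bounded Lipschitz domain and $U:=[0,1]^{\mathbb N}$. $\mathscr F$ is the set of finitely supported multi-indices in $\mathbb N_0^{\mathbb N}$; $|\boldsymbol\nu|=\sum_j\nu_j$, $\boldsymbol b^{\boldsymbol\nu}=\prod_jb_j^{\nu_j}$, $\boldsymbol m\le\boldsymbol\nu$ componentwise, $\partial_{\boldsymbol y}^{\boldsymbol\nu}=\prod_j\partial^{\nu_j}/\partial y_j^{\nu_j}$. $S(n,m)=\frac1{m!}\sum_{j=0}^m(-1)^{m-j}\binom mj j^n$ (Stirling numbers of the second kind, $S(0,0)=1$). Let $\boldsymbol\psi_i:D_{\rm ref}\to\mathbb R^d$, $\boldsymbol V(\boldsymbol x,\boldsymbol y)=\boldsymbol x+\frac1{\sqrt6}\sum_{i\ge1}\sin(2\pi y_i)\boldsymbol\psi_i(\boldsymbol x)$, $J(\boldsymbol x,\boldsymbol y)=I+\frac1{\sqrt6}\sum_{i\ge1}\sin(2\pi y_i)\boldsymbol\psi_i'(\boldsymbol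 x)$, $D(\boldsymbol y)=\boldsymbol V(D_{\rm ref},\boldsymbol y)$. $\|v\|_{L^\infty}$ is the essential sup of the absolute value / Euclidean / spectral norm; for vector fields $\|v\|_{W^{1,\infty}}=\max(\operatorname{ess\,sup}\|v\|_2,\operatorname{ess\,sup}\|v'\|_2)$. Assumptions: (A1) each $\boldsymbol V(\cdot,\boldsymbol y):\overline{D_{\rm ref}}\to\mathbb R^d$ is invertible and $C^2$; (A2) $\|\boldsymbol V(\cdot,\boldsymbol y)\|_{C^2(\overline{D_{\rm ref}})}\le C$ and $\|\boldsymbol V^{-1}(\cdot,\boldsymbol y)\|_{C^2(\overline{D(\boldsymbol y)})}\le C$ uniformly in $\boldsymbol y$; (A3) there are $0<\sigma_{\min}\le1\le\sigma_{\max}<\infty$ such that all singular values of $J(\boldsymbol x,\boldsymbol y)$ lie in $[\sigma_{\min},\sigma_{\max}]$ for all $\boldsymbol x,\boldsymbol y$; (A4) $\|\boldsymbol\psi_i\|_{W^{1,\infty}(D_{\rm ref})}<\infty$ and $\sum_i\|\boldsymbol\psi_i\|_{W^{1,\infty}(D_{\rm ref})}<\infty$. Define $b_i:=\frac1{\sqrt6}\|\boldsymbol\psi_i\|_{W^{1,\infty}(D_{\rm ref})}$, $\xi_{\boldsymbol b}:=\sum_ib_i$. *)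

theory Defs
  imports "HOL-Analysis.Analysis" "HOL-Probability.Essential_Supremum" "HOL-Combinatorics.Stirling"
begin

definition lipschitz_domain :: "(real^'n) set \<Rightarrow> bool" where
  "lipschitz_domain D \<longleftrightarrow> open D \<and> connected D \<and> D \<noteq> {} \<and>
     (\<forall>p\<in>frontier D. \<exists>r>0. \<exists>(Q::real^'n \<Rightarrow> real^'n) (k::'n) (g::real^'n \<Rightarrow> real) (L::real).
        orthogonal_transformation Q \<and> L-lipschitz_on UNIV g \<and>
        (\<forall>x t. g (\<chi> i. if i = k then t else x $ i) = g x) \<and>
        D \<inter> ball p r = {x \<in> ball p r. (Q x) $ k < g (Q x)})"

text \<open>f is C^2 on the closure of the open set S (derivatives up to order 2 exist on S and
  extend continuously to closure S, since they are uniformly continuous on S) with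
  C^2 norm bounded by C.\<close>
definition C2_bounded_on :: "('a::euclidean_space \<Rightarrow> 'b::euclidean_space) \<Rightarrow> 'a set \<Rightarrow> real \<Rightarrow> bool" where
  "C2_bounded_on f S C \<longleftrightarrow> continuous_on (closure S) f \<and> (\<forall>x\<in>closure S. norm (f x) \<le> C) \<and>
     (\<exists>(f'::'a \<Rightarrow> 'a \<Rightarrow>\<^sub>L 'b) (f''::'a \<Rightarrow> 'a \<Rightarrow>\<^sub>L ('a \<Rightarrow>\<^sub>L 'b)).
        (\<forall>x\<in>S. (f has_derivative blinfun_apply (f' x)) (at x)) \<and>
        (\<forall>x\<in>S. (f' has_derivative blinfun_apply (f'' x)) (at x)) \<and>
        uniformly_continuous_on S f' \<and> uniformly_continuous_on S f'' \<and>
        (\<forall>x\<in>S. norm (f' x) \<le> C \<and> norm (f'' x) \<le> C))"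

definition singular_value :: "real^'n^'n \<Rightarrow> real \<Rightarrow> bool" where
  "singular_value A s \<longleftrightarrow> s \<ge> 0 \<and> (\<exists>v. v \<noteq> 0 \<and> (transpose A ** A) *v v = (s\<^sup>2) *\<^sub>R v)"

definition spec_norm :: "real^'n^'m \<Rightarrow> real" where
  "spec_norm A = onorm (\<lambda>v. A *v v)"

definition Linf_on :: "(real^'n) set \<Rightarrow> (real^'n \<Rightarrow> real) \<Rightarrow> ereal" where
  "Linf_on D f = esssup (lebesgue_on D) (\<lambda>x. ereal (f x))"

definition W1inf :: "(real^'n) set \<Rightarrow> (real^'n \<Rightarrow> real^'n) \<Rightarrow> ereal" where
  "W1inf D f = max (Linf_on D (\<lambda>x. norm (f x))) (Linf_on D (\<lambda>x. spec_norm (jacobian f (at x))))"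

definition mi_supp :: "(nat \<Rightarrow> nat) \<Rightarrow> nat set" where
  "mi_supp \<nu> = {j. \<nu> j \<noteq> 0}"

definition mi_abs :: "(nat \<Rightarrow> nat) \<Rightarrow> nat" where
  "mi_abs \<nu> = (\<Sum>j\<in>mi_supp \<nu>. \<nu> j)"

definition mi_pow :: "(nat \<Rightarrow> real) \<Rightarrow> (nat \<Rightarrow> nat) \<Rightarrow> real" where
  "mi_pow b \<nu> = (\<Prod>j\<in>mi_supp \<nu>. b j ^ \<nu> j)"

definition pderiv_coord :: "nat \<Rightarrow> ((nat \<Rightarrow> real) \<Rightarrow> real) \<Rightarrow> (nat \<Rightarrow> real) \<Rightarrow> real" where
  "pderiv_coord j f y = deriv (\<lambda>t. f (y(j := t))) (y j)"

definition pderiv_multi :: "(nat \<Rightarrow> nat) \<Rightarrow> ((nat \<Rightarrow> real) \<Rightarrow> real) \<Rightarrow> (nat \<Rightarrow> real) \<Rightarrow> real" where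
  "pderiv_multi \<nu> f = foldr (\<lambda>j g. (pderiv_coord j ^^ \<nu> j) g) (sorted_list_of_set (mi_supp \<nu>)) f"

text \<open>The domain mapping V, its Jacobian J and the coefficients b_i (indices start at 0).\<close>
definition Vmap :: "(nat \<Rightarrow> real^'n \<Rightarrow> real^'n) \<Rightarrow> real^'n \<Rightarrow> (nat \<Rightarrow> real) \<Rightarrow> real^'n" where
  "Vmap psi x y = x + (1 / sqrt 6) *\<^sub>R (\<Sum>i. sin (2 * pi * y i) *\<^sub>R psi i x)"

definition Jmat :: "(nat \<Rightarrow> real^'n \<Rightarrow> real^'n) \<Rightarrow> real^'n \<Rightarrow> (nat \<Rightarrow> real) \<Rightarrow> real^'n^'n" where
  "Jmat psi x y = mat 1 + (1 / sqrt 6) *\<^sub>R (\<Sum>i. sin (2 * pi * y i) *\<^sub>R jacobian (psi i) (at x))"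

definition bcoef :: "(real^'n) set \<Rightarrow> (nat \<Rightarrow> real^'n \<Rightarrow> real^'n) \<Rightarrow> nat \<Rightarrow> real" where
  "bcoef D psi i = real_of_ereal (W1inf D (psi i)) / sqrt 6"

end

theory Submission
  imports Defs
begin

text \<open>
  Write \<open>J = I + \<Sum>\<^sub>i sin (2\<pi>y\<^sub>i) A\<^sub>i\<close> with \<open>A\<^sub>i = \<psi>\<^sub>i' / \<surd>6\<close>. By (A2) the
  Jacobians \<open>\<psi>\<^sub>i'\<close> are continuous, so their essential bounds hold pointwise on the open
  domain and every entry of \<open>A\<^sub>i\<close> is bounded by \<open>b\<^sub>i\<close>.

  Expanding \<open>det J = \<Sum>\<^sub>\<sigma> sgn \<sigma> \<Prod>\<^sub>k J(k, \<sigma> k)\<close> and differentiating by the product rule,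
  \<open>\<partial>\<^sup>\<nu> det J\<close> is a signed sum of products of \<open>d\<close> factors, each an undifferentiated entry
  (bounded by \<open>1 + \<xi>\<close>) or an entry differentiated \<open>m \<ge> 1\<close> times in a single \<open>y\<^sub>j\<close>
  (bounded by \<open>(2\<pi>)\<^sup>m b\<^sub>j\<close>); mixed derivatives of an entry vanish. Taking the coordinates
  of \<open>supp \<nu>\<close> one at a time, the \<open>\<nu>\<^sub>j\<close> derivatives in \<open>y\<^sub>j\<close> are grouped into \<open>w\<^sub>j\<close> blocks
  (\<open>S(\<nu>\<^sub>j, w\<^sub>j)\<close> ways) which land on distinct rows still undifferentiated. Summing over
  the \<open>d!\<close> permutations, a row choice with \<open>|w|\<close> differentiated rows contributes
  \<open>d (d - 1) \<dots> (d - |w| + 1) (1 + \<xi>)\<^bsup>d - |w|\<^esup> \<le> |w|! (2 + \<xi>)\<^sup>d\<close>.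
  The counting is organised by weights on the terms of the expansion, which each derivative
  transforms explicitly.
\<close>

section \<open>Factors of the expanded determinant and their derivatives\<close>

definition sin_shift :: "nat \<Rightarrow> real \<Rightarrow> real" where
  "sin_shift a x = sin (x + real a * pi / 2)"

lemma abs_sin_shift_le_one: "\<bar>sin_shift a x\<bar> \<le> 1"
  by (simp add: sin_shift_def)

lemma sin_shift_has_real_derivative:
  "((\<lambda>t. sin_shift a (2 * pi * t)) has_real_derivative 2 * pi * sin_shift (Suc a) (2 * pi * t0)) (at t0)"
proof -
  have "((\<lambda>t. sin (2 * pi * t + real a * pi / 2)) has_real_derivative
      cos (2 * pi * t0 + real a * pi / 2) * (2 * pi)) (at t0)"
    by (auto intro!: derivative_eq_intros)
  moreover have "cos (2 * pi * t0 + real a * pi / 2) = sin_shift (Suc a) (2 * pi * t0)"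
    by (simp add: sin_shift_def distrib_right add_divide_distrib sin_add algebra_simps)
  ultimately show ?thesis
    by (simp add: sin_shift_def mult.commute)
qed

lemma abs_sin_mult_le:
  fixes a b :: real
  assumes "\<bar>a\<bar> \<le> b"
  shows "\<bar>sin x * a\<bar> \<le> b"
proof -
  have "\<bar>sin x\<bar> * \<bar>a\<bar> \<le> 1 * b"
    using assms by (intro mult_mono) (auto simp: abs_sin_le_one)
  then show ?thesis
    by (simp add: abs_mult)
qed

lemma
  fixes a b :: "nat \<Rightarrow> real"
  assumes b: "summable b" and ab: "\<And>i. \<bar>a i\<bar> \<le> b i"
  shows summable_sin_mult: "summable (\<lambda>i. sin (x i) * a i)"
    and abs_suminf_sin_mult_le: "\<bar>\<Sum>i. sin (x i) * a i\<bar> \<le> suminf b"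
proof -
  have le: "\<bar>sin (x i) * a i\<bar> \<le> b i" for i
    by (rule abs_sin_mult_le[OF ab])
  have abs_summable: "summable (\<lambda>i. \<bar>sin (x i) * a i\<bar>)"
    by (rule summable_rabs_comparison_test[OF _ b]) (use le in auto)
  then show "summable (\<lambda>i. sin (x i) * a i)"
    by (rule summable_rabs_cancel)
  have "\<bar>\<Sum>i. sin (x i) * a i\<bar> \<le> (\<Sum>i. \<bar>sin (x i) * a i\<bar>)"
    by (rule summable_rabs[OF abs_summable])
  also have "\<dots> \<le> suminf b"
    by (rule suminf_le[OF le abs_summable b])
  finally show "\<bar>\<Sum>i. sin (x i) * a i\<bar> \<le> suminf b" .
qed

text \<open>Entries of \<open>Jmat\<close>, with \<open>\<alpha> k l i\<close> the \<open>(k, l)\<close> entry of \<open>\<psi>\<^sub>i' / \<surd>6\<close>.\<close>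

definition pert_entry :: "('n \<Rightarrow> 'n \<Rightarrow> nat \<Rightarrow> real) \<Rightarrow> 'n \<Rightarrow> 'n \<Rightarrow> (nat \<Rightarrow> real) \<Rightarrow> real" where
  "pert_entry \<alpha> k l z = (if k = l then 1 else 0) + (\<Sum>i. sin (2 * pi * z i) * \<alpha> k l i)"

lemma abs_pert_entry_le:
  assumes "summable b" and "\<And>i. \<bar>\<alpha> k l i\<bar> \<le> b i"
  shows "\<bar>pert_entry \<alpha> k l z\<bar> \<le> 1 + suminf b"
proof -
  have "\<bar>pert_entry \<alpha> k l z\<bar> \<le> \<bar>(if k = l then 1 else 0)::real\<bar> + \<bar>\<Sum>i. sin (2 * pi * z i) * \<alpha> k l i\<bar>"
    unfolding pert_entry_def by (rule abs_triangle_ineq)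
  also have "\<dots> \<le> 1 + suminf b"
    using abs_suminf_sin_mult_le[OF assms] by (intro add_mono) auto
  finally show ?thesis .
qed

lemma pert_entry_fun_upd:
  assumes b: "summable b" and ab: "\<And>i. \<bar>\<alpha> k l i\<bar> \<le> b i"
  shows "pert_entry \<alpha> k l (z(j := t)) = pert_entry \<alpha> k l z + (sin (2 * pi * t) - sin (2 * pi * z j)) * \<alpha> k l j"
proof -
  define c where "c = (sin (2 * pi * t) - sin (2 * pi * z j)) * \<alpha> k l j"
  have "(\<lambda>i. sin (2 * pi * (z(j := t)) i) * \<alpha> k l i) =
      (\<lambda>i. sin (2 * pi * z i) * \<alpha> k l i + (if i = j then c else 0))"
    by (auto simp: c_def algebra_simps)
  moreover have "(\<lambda>i. sin (2 * pi * z i) * \<alpha> k l i + (if i = j then c else 0)) sums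
      ((\<Sum>i. sin (2 * pi * z i) * \<alpha> k l i) + c)"
    by (intro sums_add summable_sums summable_sin_mult[OF b ab]) (rule sums_single[of j "\<lambda>_. c", simplified])
  ultimately show ?thesis
    by (simp add: pert_entry_def sums_iff c_def)
qed

text \<open>A factor is a row entry in a fixed column \<open>l\<close> of the expanded determinant:
  \<open>Partial l j a\<close> is that entry differentiated \<open>a \<ge> 1\<close> times in \<open>z\<^sub>j\<close>; differentiating
  it in any other coordinate makes it \<open>Vanish\<close>.\<close>

datatype 'n factor = Entry 'n | Partial 'n nat nat | Vanish

fun factor_val :: "('n \<Rightarrow> 'n \<Rightarrow> nat \<Rightarrow> real) \<Rightarrow> 'n \<Rightarrow> 'n factor \<Rightarrow> (nat \<Rightarrow> real) \<Rightarrow> real" where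
  "factor_val \<alpha> k (Entry l) z = pert_entry \<alpha> k l z"
| "factor_val \<alpha> k (Partial l j a) z = \<alpha> k l j * (2 * pi) ^ a * sin_shift a (2 * pi * z j)"
| "factor_val \<alpha> k Vanish z = 0"

fun factor_deriv :: "nat \<Rightarrow> 'n factor \<Rightarrow> 'n factor" where
  "factor_deriv j (Entry l) = Partial l j 1"
| "factor_deriv j (Partial l i a) = (if i = j then Partial l j (Suc a) else Vanish)"
| "factor_deriv j Vanish = Vanish"

lemma factor_val_has_real_derivative:
  assumes b: "summable b" and ab: "\<And>k l i. \<bar>\<alpha> k l i\<bar> \<le> b i"
  shows "((\<lambda>t. factor_val \<alpha> k s (z(j := t))) has_real_derivative
      factor_val \<alpha> k (factor_deriv j s) (z(j := t0))) (at t0)"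
proof (cases s)
  case (Entry l)
  have "((\<lambda>t. pert_entry \<alpha> k l z + (sin (2 * pi * t) - sin (2 * pi * z j)) * \<alpha> k l j) has_real_derivative
      cos (2 * pi * t0) * (2 * pi) * \<alpha> k l j) (at t0)"
    by (auto intro!: derivative_eq_intros)
  moreover have "cos (2 * pi * t0) = sin_shift 1 (2 * pi * t0)"
    by (simp add: sin_shift_def sin_add)
  ultimately show ?thesis
    using Entry by (simp add: pert_entry_fun_upd[OF b ab] mult_ac)
next
  case (Partial l i a)
  have "((\<lambda>t. \<alpha> k l j * (2 * pi) ^ a * sin_shift a (2 * pi * t)) has_real_derivative
      \<alpha> k l j * (2 * pi) ^ a * (2 * pi * sin_shift (Suc a) (2 * pi * t0))) (at t0)"
    by (intro DERIV_cmult sin_shift_has_real_derivative)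
  then show ?thesis
    using Partial by (simp add: mult_ac)
qed simp

section \<open>Symbolic expansions\<close>

text \<open>A monomial \<open>(c, s)\<close> stands for \<open>c \<Prod>\<^sub>k factor_val \<alpha> k (s k)\<close>; an expansion is a
  multiset of monomials, standing for their sum.\<close>

type_synonym 'n monomial = "real \<times> ('n \<Rightarrow> 'n factor)"

definition monomial_val :: "('n \<Rightarrow> 'n \<Rightarrow> nat \<Rightarrow> real) \<Rightarrow> 'n::finite monomial \<Rightarrow> (nat \<Rightarrow> real) \<Rightarrow> real" where
  "monomial_val \<alpha> t z = fst t * (\<Prod>k\<in>UNIV. factor_val \<alpha> k (snd t k) z)"

definition expansion_val ::
    "('n \<Rightarrow> 'n \<Rightarrow> nat \<Rightarrow> real) \<Rightarrow> 'n::finite monomial multiset \<Rightarrow> (nat \<Rightarrow> real) \<Rightarrow> real" where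
  "expansion_val \<alpha> L z = (\<Sum>t\<in>#L. monomial_val \<alpha> t z)"

definition monomial_deriv :: "nat \<Rightarrow> 'n::finite monomial \<Rightarrow> 'n monomial multiset" where
  "monomial_deriv j t = image_mset (\<lambda>k. (fst t, (snd t)(k := factor_deriv j (snd t k)))) (mset_set UNIV)"

definition expansion_deriv :: "nat \<Rightarrow> 'n::finite monomial multiset \<Rightarrow> 'n monomial multiset" where
  "expansion_deriv j L = (\<Sum>t\<in>#L. monomial_deriv j t)"

definition expansion_deriv_multi :: "(nat \<Rightarrow> nat) \<Rightarrow> 'n::finite monomial multiset \<Rightarrow> 'n monomial multiset" where
  "expansion_deriv_multi \<nu> L =
     foldr (\<lambda>j. expansion_deriv j ^^ \<nu> j) (sorted_list_of_set (mi_supp \<nu>)) L"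

lemma expansion_val_simps [simp]:
  "expansion_val \<alpha> {#} z = 0"
  "expansion_val \<alpha> (add_mset t L) z = monomial_val \<alpha> t z + expansion_val \<alpha> L z"
  "expansion_val \<alpha> (L + M) z = expansion_val \<alpha> L z + expansion_val \<alpha> M z"
  by (simp_all add: expansion_val_def)

lemma expansion_deriv_simps [simp]:
  "expansion_deriv j {#} = {#}"
  "expansion_deriv j (add_mset t L) = monomial_deriv j t + expansion_deriv j L"
  "expansion_deriv j (L + M) = expansion_deriv j L + expansion_deriv j M"
  by (simp_all add: expansion_deriv_def)

lemma expansion_deriv_pow_union:
  "(expansion_deriv j ^^ n) (L + M) = (expansion_deriv j ^^ n) L + (expansion_deriv j ^^ n) M"
  by (induction n) simp_all

lemma expansion_deriv_pow_empty [simp]: "(expansion_deriv j ^^ n) {#} = {#}"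
  by (induction n) simp_all

lemma expansion_val_monomial_deriv:
  "expansion_val \<alpha> (monomial_deriv j t) z =
     fst t * (\<Sum>k\<in>UNIV. factor_val \<alpha> k (factor_deriv j (snd t k)) z *
                         (\<Prod>k'\<in>UNIV - {k}. factor_val \<alpha> k' (snd t k') z))"
proof -
  have "monomial_val \<alpha> (fst t, (snd t)(k := factor_deriv j (snd t k))) z =
      fst t * (factor_val \<alpha> k (factor_deriv j (snd t k)) z * (\<Prod>k'\<in>UNIV - {k}. factor_val \<alpha> k' (snd t k') z))"
    for k
    unfolding monomial_val_def by (subst prod.remove[of _ k]) (auto intro!: prod.cong)
  moreover have "expansion_val \<alpha> (monomial_deriv j t) z =
      (\<Sum>k\<in>UNIV. monomial_val \<alpha> (fst t, (snd t)(k := factor_deriv j (snd t k))) z)"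
    by (simp add: expansion_val_def monomial_deriv_def sum_unfold_sum_mset image_mset.compositionality o_def)
  ultimately show ?thesis
    by (simp add: sum_distrib_left)
qed

lemma monomial_val_has_real_derivative:
  assumes "summable b" and "\<And>k l i. \<bar>\<alpha> k l i\<bar> \<le> b i"
  shows "((\<lambda>u. monomial_val \<alpha> t (z(j := u))) has_real_derivative
      expansion_val \<alpha> (monomial_deriv j t) (z(j := v))) (at v)"
  unfolding monomial_val_def expansion_val_monomial_deriv
  by (intro DERIV_cmult has_field_derivative_prod[where f = "\<lambda>k u. factor_val \<alpha> k (snd t k) (z(j := u))", simplified]
      factor_val_has_real_derivative[OF assms])

lemma expansion_val_has_real_derivative:
  assumes "summable b" and "\<And>k l i. \<bar>\<alpha> k l i\<bar> \<le> b i"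
  shows "((\<lambda>u. expansion_val \<alpha> L (z(j := u))) has_real_derivative
      expansion_val \<alpha> (expansion_deriv j L) (z(j := v))) (at v)"
proof (induction L)
  case (add t L)
  then show ?case
    unfolding expansion_val_simps expansion_deriv_simps
    by (intro DERIV_add monomial_val_has_real_derivative[OF assms])
qed simp

lemma pderiv_coord_expansion_val:
  assumes "summable b" and "\<And>k l i. \<bar>\<alpha> k l i\<bar> \<le> b i"
  shows "pderiv_coord j (expansion_val \<alpha> L) = expansion_val \<alpha> (expansion_deriv j L)"
proof
  fix z
  show "pderiv_coord j (expansion_val \<alpha> L) z = expansion_val \<alpha> (expansion_deriv j L) z"
    using DERIV_imp_deriv[OF expansion_val_has_real_derivative[OF assms,
          where L = L and z = z and j = j and v = "z j"]]
    by (simp add: pderiv_coord_def)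
qed

lemma pderiv_multi_expansion_val:
  assumes "summable b" and "\<And>k l i. \<bar>\<alpha> k l i\<bar> \<le> b i"
  shows "pderiv_multi \<nu> (expansion_val \<alpha> L) = expansion_val \<alpha> (expansion_deriv_multi \<nu> L)"
proof -
  have pow: "(pderiv_coord j ^^ n) (expansion_val \<alpha> M) = expansion_val \<alpha> ((expansion_deriv j ^^ n) M)" for j n M
    by (induction n) (simp_all add: pderiv_coord_expansion_val[OF assms])
  have "foldr (\<lambda>j g. (pderiv_coord j ^^ \<nu> j) g) js (expansion_val \<alpha> L) =
      expansion_val \<alpha> (foldr (\<lambda>j. expansion_deriv j ^^ \<nu> j) js L)" for js
    by (induction js) (simp_all add: pow)
  then show ?thesis
    by (simp add: pderiv_multi_def expansion_deriv_multi_def)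
qed

definition det_expansion :: "'n::finite monomial multiset" where
  "det_expansion = image_mset (\<lambda>p. (of_int (sign p), \<lambda>k. Entry (p k))) (mset_set {p. p permutes UNIV})"

lemma det_pert_matrix_eq_expansion_val:
  "det (\<chi> k l. pert_entry \<alpha> k l z) = expansion_val \<alpha> (det_expansion :: 'n::finite monomial multiset) z"
  by (simp add: det_def det_expansion_def expansion_val_def monomial_val_def sum_unfold_sum_mset
      image_mset.compositionality o_def)

section \<open>Weights of expansions\<close>

fun factor_bound :: "(nat \<Rightarrow> real) \<Rightarrow> real \<Rightarrow> 'n factor \<Rightarrow> real" where
  "factor_bound b \<xi> (Entry l) = 1 + \<xi>"
| "factor_bound b \<xi> (Partial l j a) = (2 * pi) ^ a * b j"
| "factor_bound b \<xi> Vanish = 0"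

lemma abs_factor_val_le:
  assumes b: "summable b" and ab: "\<And>k l i. \<bar>\<alpha> k l i\<bar> \<le> b i"
  shows "\<bar>factor_val \<alpha> k s z\<bar> \<le> factor_bound b (suminf b) s"
proof (cases s)
  case (Entry l)
  then show ?thesis
    using abs_pert_entry_le[OF b ab] by simp
next
  case (Partial l j a)
  have "\<bar>\<alpha> k l j\<bar> * (2 * pi) ^ a * \<bar>sin_shift a (2 * pi * z j)\<bar> \<le> b j * (2 * pi) ^ a * 1"
    using ab[of k l j] by (intro mult_mono abs_sin_shift_le_one) auto
  then show ?thesis
    using Partial by (simp add: abs_mult mult.commute)
qed simp

fun is_entry :: "'n factor \<Rightarrow> bool" where
  "is_entry (Entry l) = True"
| "is_entry _ = False"

fun is_partial :: "nat \<Rightarrow> 'n factor \<Rightarrow> bool" where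
  "is_partial j (Partial l i a) = (i = j)"
| "is_partial j _ = False"

lemma is_entry_imp_not_is_partial: "is_entry s \<Longrightarrow> \<not> is_partial j s"
  by (cases s) auto

text \<open>A weight bounds the differentiated factors of a monomial by \<open>factor_bound\<close> and
  leaves the rest to a function \<open>h\<close> of the number of rows selected by \<open>P\<close>.\<close>

definition derived_weight :: "(nat \<Rightarrow> real) \<Rightarrow> real \<Rightarrow> ('n::finite \<Rightarrow> 'n factor) \<Rightarrow> real" where
  "derived_weight b \<xi> s = (\<Prod>k\<in>{k. \<not> is_entry (s k)}. factor_bound b \<xi> (s k))"

definition weight ::
    "('n factor \<Rightarrow> bool) \<Rightarrow> (nat \<Rightarrow> real) \<Rightarrow> real \<Rightarrow> (nat \<Rightarrow> real) \<Rightarrow> ('n::finite \<Rightarrow> 'n factor) \<Rightarrow> real"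
  where "weight P b \<xi> h s = derived_weight b \<xi> s * h (card {k. P (s k)})"

definition expansion_weight ::
    "('n factor \<Rightarrow> bool) \<Rightarrow> (nat \<Rightarrow> real) \<Rightarrow> real \<Rightarrow> (nat \<Rightarrow> real) \<Rightarrow> 'n::finite monomial multiset \<Rightarrow> real"
  where "expansion_weight P b \<xi> h L = (\<Sum>t\<in>#L. \<bar>fst t\<bar> * weight P b \<xi> h (snd t))"

lemma expansion_weight_simps [simp]:
  "expansion_weight P b \<xi> h {#} = 0"
  "expansion_weight P b \<xi> h (add_mset t L) = \<bar>fst t\<bar> * weight P b \<xi> h (snd t) + expansion_weight P b \<xi> h L"
  "expansion_weight P b \<xi> h (L + M) = expansion_weight P b \<xi> h L + expansion_weight P b \<xi> h M"
  by (simp_all add: expansion_weight_def)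

lemma weight_entry_power_eq_prod:
  "weight is_entry b \<xi> (\<lambda>f. (1 + \<xi>) ^ f) s = (\<Prod>k\<in>UNIV. factor_bound b \<xi> (s k))"
proof -
  have "(\<Prod>k\<in>UNIV. factor_bound b \<xi> (s k)) =
      (\<Prod>k\<in>{k. is_entry (s k)}. factor_bound b \<xi> (s k)) * derived_weight b \<xi> s"
    unfolding derived_weight_def
    using prod.Int_Diff[of UNIV "\<lambda>k. factor_bound b \<xi> (s k)" "{k. is_entry (s k)}"]
    by (simp add: set_diff_eq)
  moreover have "(\<Prod>k\<in>{k. is_entry (s k)}. factor_bound b \<xi> (s k)) = (1 + \<xi>) ^ card {k. is_entry (s k)}"
  proof -
    have "factor_bound b \<xi> (s k) = 1 + \<xi>" if "is_entry (s k)" for k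
      using that by (cases "s k") auto
    then show ?thesis
      by simp
  qed
  ultimately show ?thesis
    by (simp add: weight_def mult.commute)
qed

lemma abs_expansion_val_le_expansion_weight:
  assumes "summable b" and "\<And>k l i. \<bar>\<alpha> k l i\<bar> \<le> b i"
  shows "\<bar>expansion_val \<alpha> L z\<bar> \<le> expansion_weight is_entry b (suminf b) (\<lambda>f. (1 + suminf b) ^ f) L"
proof (induction L)
  case (add t L)
  have "\<bar>monomial_val \<alpha> t z\<bar> = \<bar>fst t\<bar> * (\<Prod>k\<in>UNIV. \<bar>factor_val \<alpha> k (snd t k) z\<bar>)"
    by (simp add: monomial_val_def abs_mult abs_prod)
  also have "\<dots> \<le> \<bar>fst t\<bar> * weight is_entry b (suminf b) (\<lambda>f. (1 + suminf b) ^ f) (snd t)"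
    unfolding weight_entry_power_eq_prod
    by (intro mult_left_mono prod_mono) (auto intro: abs_factor_val_le[OF assms])
  finally show ?case
    using add.IH by simp
qed simp

lemma expansion_weight_det_expansion:
  "expansion_weight is_entry b \<xi> h (det_expansion :: 'n::finite monomial multiset) = fact CARD('n) * h CARD('n)"
proof -
  have "\<bar>real_of_int (sign p)\<bar> = 1" for p :: "'n \<Rightarrow> 'n"
    by (simp add: sign_def)
  then show ?thesis
    by (simp add: expansion_weight_def det_expansion_def weight_def derived_weight_def
        image_mset.compositionality o_def sum_unfold_sum_mset[symmetric] card_permutations)
qed

lemma derived_weight_fun_upd:
  assumes "\<not> is_entry x"
  shows "derived_weight b \<xi> (s(k := x)) =
           factor_bound b \<xi> x * (\<Prod>k'\<in>{k'. \<not> is_entry (s k')} - {k}. factor_bound b \<xi> (s k'))"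
proof -
  have "{k'. \<not> is_entry ((s(k := x)) k')} = insert k ({k'. \<not> is_entry (s k')} - {k})"
    using assms by auto
  then show ?thesis
    unfolding derived_weight_def by (simp add: prod.insert_remove)
qed

lemma derived_weight_fun_upd_factor_deriv:
  "derived_weight b \<xi> (s(k := factor_deriv j (s k))) =
     (if is_entry (s k) then 2 * pi * b j * derived_weight b \<xi> s
      else if is_partial j (s k) then 2 * pi * derived_weight b \<xi> s else 0)"
proof -
  define R where "R = (\<Prod>k'\<in>{k'. \<not> is_entry (s k')} - {k}. factor_bound b \<xi> (s k'))"
  have new: "derived_weight b \<xi> (s(k := factor_deriv j (s k))) = factor_bound b \<xi> (factor_deriv j (s k)) * R"
    unfolding R_def by (rule derived_weight_fun_upd) (cases "s k"; simp)
  have old: "derived_weight b \<xi> s = (if is_entry (s k) then R else factor_bound b \<xi> (s k) * R)"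
  proof (cases "is_entry (s k)")
    case True
    then have "{k'. \<not> is_entry (s k')} - {k} = {k'. \<not> is_entry (s k')}"
      by auto
    then show ?thesis
      using True by (simp add: R_def derived_weight_def)
  next
    case False
    then show ?thesis
      by (simp add: R_def derived_weight_def prod.remove)
  qed
  show ?thesis
    unfolding new old by (cases "s k") auto
qed

lemma card_is_partial_fun_upd_factor_deriv:
  fixes s :: "'n::finite \<Rightarrow> 'n factor"
  shows "card {k'. is_partial j ((s(k := factor_deriv j (s k))) k')} =
     (if is_entry (s k) then Suc (card {k'. is_partial j (s k')}) else card {k'. is_partial j (s k')})"
proof (cases "is_entry (s k)")
  case True
  then have "{k'. is_partial j ((s(k := factor_deriv j (s k))) k')} = insert k {k'. is_partial j (s k')}"
    by (cases "s k") auto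
  moreover have "k \<notin> {k'. is_partial j (s k')}"
    using True by (simp add: is_entry_imp_not_is_partial)
  ultimately show ?thesis
    using True by simp
next
  case False
  then have "{k'. is_partial j ((s(k := factor_deriv j (s k))) k')} = {k'. is_partial j (s k')}"
    by (cases "s k") auto
  with False show ?thesis
    by simp
qed

lemma weight_partial_fun_upd_factor_deriv:
  "weight (is_partial j) b \<xi> h (s(k := factor_deriv j (s k))) =
     (if is_entry (s k) then 2 * pi * b j * derived_weight b \<xi> s * h (Suc (card {k'. is_partial j (s k')}))
      else if is_partial j (s k) then 2 * pi * derived_weight b \<xi> s * h (card {k'. is_partial j (s k')})
      else 0)"
  unfolding weight_def derived_weight_fun_upd_factor_deriv card_is_partial_fun_upd_factor_deriv by simp

definition active_rows :: "nat \<Rightarrow> ('n::finite \<Rightarrow> 'n factor) \<Rightarrow> nat" where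
  "active_rows j s = card {k. is_entry (s k) \<or> is_partial j (s k)}"

lemma active_rows_fun_upd_factor_deriv:
  "active_rows j (s(k := factor_deriv j (s k))) = active_rows j s"
proof -
  have "is_entry ((s(k := factor_deriv j (s k))) k') \<or> is_partial j ((s(k := factor_deriv j (s k))) k') \<longleftrightarrow>
      is_entry (s k') \<or> is_partial j (s k')" for k'
    by (cases "k' = k"; cases "s k'") auto
  then show ?thesis
    by (simp add: active_rows_def)
qed

lemma card_is_entry_eq: "card {k. is_entry (s k)} = active_rows j s - card {k. is_partial j (s k)}"
proof -
  have "{k. is_entry (s k) \<or> is_partial j (s k)} = {k. is_entry (s k)} \<union> {k. is_partial j (s k)}"
    by auto
  moreover have "{k. is_entry (s k)} \<inter> {k. is_partial j (s k)} = {}"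
    by (auto dest: is_entry_imp_not_is_partial)
  ultimately show ?thesis
    by (simp add: active_rows_def card_Un_disjoint)
qed

lemma sum_if_disjoint_const:
  fixes A B :: real
  assumes "\<And>k. p k \<Longrightarrow> \<not> q k"
  shows "(\<Sum>k\<in>(UNIV :: 'n::finite set). if p k then A else if q k then B else 0) =
           real (card {k. p k}) * A + real (card {k. q k}) * B"
proof -
  have "(\<Sum>k\<in>(UNIV :: 'n set). if p k then A else if q k then B else 0) =
      (\<Sum>k\<in>{k. p k}. A) + (\<Sum>k\<in>{k. \<not> p k}. if q k then B else 0)"
    by (subst sum.If_cases) (auto simp: Compl_eq)
  also have "(\<Sum>k\<in>{k. \<not> p k}. if q k then B else 0) = (\<Sum>k\<in>{k. \<not> p k} \<inter> {k. q k}. B)"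
    by (subst sum.If_cases) auto
  also have "{k. \<not> p k} \<inter> {k. q k} = {k. q k}"
    using assms by auto
  finally show ?thesis
    by simp
qed

text \<open>\<open>h\<close> is evaluated at the number \<open>m\<close> of \<open>z\<^sub>j\<close>-partial rows: \<open>\<partial>\<^sub>j\<close> either raises
  the order of one of them (factor \<open>2\<pi>\<close>) or differentiates one of the \<open>r - m\<close> entry rows
  (factor \<open>2\<pi> b\<^sub>j\<close>).\<close>

definition weight_step :: "(nat \<Rightarrow> real) \<Rightarrow> nat \<Rightarrow> nat \<Rightarrow> (nat \<Rightarrow> real) \<Rightarrow> nat \<Rightarrow> real" where
  "weight_step b j r h m = 2 * pi * (real m * h m + real (r - m) * b j * h (Suc m))"

lemma expansion_weight_monomial_deriv:
  "expansion_weight (is_partial j) b \<xi> h (monomial_deriv j t) =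
     \<bar>fst t\<bar> * weight (is_partial j) b \<xi> (weight_step b j (active_rows j (snd t)) h) (snd t)"
proof -
  obtain c s where t: "t = (c, s)"
    by (cases t)
  let ?m = "card {k. is_partial j (s k)}"
  have "expansion_weight (is_partial j) b \<xi> h (monomial_deriv j t) =
      \<bar>c\<bar> * (\<Sum>k\<in>UNIV. if is_entry (s k) then 2 * pi * b j * derived_weight b \<xi> s * h (Suc ?m)
        else if is_partial j (s k) then 2 * pi * derived_weight b \<xi> s * h ?m else 0)"
    by (simp add: expansion_weight_def monomial_deriv_def t image_mset.compositionality o_def
        sum_unfold_sum_mset[symmetric] weight_partial_fun_upd_factor_deriv sum_distrib_left)
  also have "\<dots> = \<bar>c\<bar> * (real (card {k. is_entry (s k)}) * (2 * pi * b j * derived_weight b \<xi> s * h (Suc ?m))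
      + real ?m * (2 * pi * derived_weight b \<xi> s * h ?m))"
    by (subst sum_if_disjoint_const[where p = "\<lambda>k. is_entry (s k)" and q = "\<lambda>k. is_partial j (s k)"])
      (auto dest: is_entry_imp_not_is_partial)
  also have "\<dots> = \<bar>c\<bar> * weight (is_partial j) b \<xi> (weight_step b j (active_rows j s) h) s"
    by (simp add: weight_def weight_step_def card_is_entry_eq[of s j] algebra_simps)
  finally show ?thesis
    by (simp add: t)
qed

lemma active_rows_expansion_deriv:
  assumes "\<forall>t\<in>#L. active_rows j (snd t) = r"
  shows "\<forall>t\<in>#expansion_deriv j L. active_rows j (snd t) = r"
  using assms by (auto simp: expansion_deriv_def monomial_deriv_def active_rows_fun_upd_factor_deriv)

lemma expansion_weight_expansion_deriv_pow:
  assumes "\<forall>t\<in>#L. active_rows j (snd t) = r"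
  shows "expansion_weight (is_partial j) b \<xi> h ((expansion_deriv j ^^ n) L) =
           expansion_weight (is_partial j) b \<xi> ((weight_step b j r ^^ n) h) L"
  using assms
proof (induction n arbitrary: h L)
  case (Suc n)
  have step: "expansion_weight (is_partial j) b \<xi> h' (expansion_deriv j L) =
      expansion_weight (is_partial j) b \<xi> (weight_step b j r h') L" for h'
    using Suc.prems by (induction L) (simp_all add: expansion_weight_monomial_deriv)
  have "expansion_weight (is_partial j) b \<xi> h ((expansion_deriv j ^^ Suc n) L) =
      expansion_weight (is_partial j) b \<xi> ((weight_step b j r ^^ n) h) (expansion_deriv j L)"
    by (simp only: funpow_Suc_right o_apply Suc.IH[OF active_rows_expansion_deriv[OF Suc.prems]])
  also have "\<dots> = expansion_weight (is_partial j) b \<xi> ((weight_step b j r ^^ Suc n) h) L"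
    by (simp only: step funpow_Suc_right funpow_swap1 o_apply)
  finally show ?case .
qed simp

section \<open>Iterated derivatives and Stirling numbers\<close>

fun ffact :: "nat \<Rightarrow> nat \<Rightarrow> nat" where
  "ffact r 0 = 1"
| "ffact r (Suc m) = ffact r m * (r - m)"

lemma ffact_add: "ffact r a * ffact (r - a) m = ffact r (a + m)"
  by (induction m) (simp_all add: diff_diff_add)

lemma ffact_eq_fact_mult_choose: "ffact r m = fact m * (r choose m)"
proof (induction m)
  case (Suc m)
  have "ffact r (Suc m) = fact m * ((r - m) * (r choose m))"
    by (simp add: Suc.IH)
  also have "(r - m) * (r choose m) = Suc m * (r choose Suc m)"
    by (simp only: binomial_absorb_comp binomial_absorption)
  finally show ?case
    by (simp add: fact_Suc algebra_simps)
qed simp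

lemma binomial_term_le_power:
  fixes \<xi> :: real
  assumes "\<xi> \<ge> 0"
  shows "real (d choose k) * (1 + \<xi>) ^ (d - k) \<le> (2 + \<xi>) ^ d"
proof (cases "k \<le> d")
  case True
  have "real (d choose k) * (1 + \<xi>) ^ (d - k) \<le> (\<Sum>i\<le>d. real (d choose i) * 1 ^ i * (1 + \<xi>) ^ (d - i))"
    using member_le_sum[of k "{..d}" "\<lambda>i. real (d choose i) * 1 ^ i * (1 + \<xi>) ^ (d - i)"] True assms
    by simp
  also have "\<dots> = (2 + \<xi>) ^ d"
    using binomial_ring[of 1 "1 + \<xi>" d] by simp
  finally show ?thesis .
qed (use assms in \<open>simp add: binomial_eq_0\<close>)

lemma ffact_mult_power_le:
  fixes \<xi> :: real
  assumes "\<xi> \<ge> 0"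
  shows "real (ffact d k) * (1 + \<xi>) ^ (d - k) \<le> fact k * (2 + \<xi>) ^ d"
  using mult_left_mono[OF binomial_term_le_power[OF assms, of d k], of "fact k"]
  by (simp add: ffact_eq_fact_mult_choose mult_ac)

lemma sum_Stirling_weight_step:
  "(\<Sum>m\<le>n. real (ffact r m) * real (Stirling n m) * b j ^ m * weight_step b j r h m) =
     2 * pi * (\<Sum>m\<le>Suc n. real (ffact r m) * real (Stirling (Suc n) m) * b j ^ m * h m)"
proof -
  define c where "c m = real (ffact r m) * b j ^ m * h m" for m
  have summand: "real (ffact r m) * real (Stirling n m) * b j ^ m * weight_step b j r h m =
      2 * pi * (real (Stirling n m) * real m * c m + real (Stirling n m) * c (Suc m))" for m
    by (simp add: weight_step_def c_def distrib_left mult_ac)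
  have shift: "(\<Sum>m\<le>n. real (Stirling n m) * real m * c m) =
      (\<Sum>m\<le>n. real (Stirling n (Suc m)) * real (Suc m) * c (Suc m))"
    using sum.atMost_Suc_shift[of "\<lambda>m. real (Stirling n m) * real m * c m" n]
    by (simp add: sum.atMost_Suc)
  have "(\<Sum>m\<le>n. real (ffact r m) * real (Stirling n m) * b j ^ m * weight_step b j r h m) =
      2 * pi * ((\<Sum>m\<le>n. real (Stirling n m) * real m * c m) + (\<Sum>m\<le>n. real (Stirling n m) * c (Suc m)))"
    by (simp only: summand sum_distrib_left[symmetric] sum.distrib)
  also have "\<dots> = 2 * pi * (\<Sum>m\<le>n. real (Stirling (Suc n) (Suc m)) * c (Suc m))"
    unfolding shift sum.distrib[symmetric] by (simp add: algebra_simps)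
  also have "(\<Sum>m\<le>n. real (Stirling (Suc n) (Suc m)) * c (Suc m)) = (\<Sum>m\<le>Suc n. real (Stirling (Suc n) m) * c m)"
    by (subst sum.atMost_Suc_shift) simp
  finally show ?thesis
    by (simp add: c_def mult_ac)
qed

lemma weight_step_pow_at_zero:
  "(weight_step b j r ^^ n) h 0 = (2 * pi) ^ n * (\<Sum>m\<le>n. real (ffact r m) * real (Stirling n m) * b j ^ m * h m)"
proof (induction n arbitrary: h)
  case (Suc n)
  show ?case
    by (simp only: funpow_Suc_right o_apply Suc.IH sum_Stirling_weight_step) simp
qed simp

text \<open>The \<open>n\<close> derivatives in \<open>z\<^sub>j\<close> fall, grouped into \<open>m\<close> blocks in \<open>Stirling n m\<close> ways,
  onto \<open>m\<close> distinct rows among the \<open>f\<close> undifferentiated ones.\<close>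

definition weight_transfer :: "(nat \<Rightarrow> real) \<Rightarrow> nat \<Rightarrow> nat \<Rightarrow> (nat \<Rightarrow> real) \<Rightarrow> nat \<Rightarrow> real" where
  "weight_transfer b j n g f =
     (2 * pi) ^ n * (\<Sum>m\<le>n. real (ffact f m) * real (Stirling n m) * b j ^ m * g (f - m))"

lemma active_rows_expansion_deriv_pow:
  assumes "\<forall>t\<in>#L. active_rows j (snd t) = r"
  shows "\<forall>t\<in>#(expansion_deriv j ^^ n) L. active_rows j (snd t) = r"
proof (induction n)
  case (Suc n)
  then show ?case
    using active_rows_expansion_deriv[OF Suc.IH] by simp
qed (simp add: assms)

lemma expansion_weight_entry_eq_partial:
  assumes "\<forall>t\<in>#L. active_rows j (snd t) = r"
  shows "expansion_weight is_entry b \<xi> g L = expansion_weight (is_partial j) b \<xi> (\<lambda>m. g (r - m)) L"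
  using assms by (induction L) (simp_all add: weight_def card_is_entry_eq[of _ j])

lemma expansion_weight_deriv_pow_monomial:
  assumes free: "\<forall>k. \<not> is_partial j (snd t k)"
  shows "expansion_weight is_entry b \<xi> g ((expansion_deriv j ^^ n) {#t#}) =
           \<bar>fst t\<bar> * weight is_entry b \<xi> (weight_transfer b j n g) (snd t)"
proof -
  define r where "r = active_rows j (snd t)"
  have rows: "\<forall>t'\<in>#{#t#}. active_rows j (snd t') = r"
    by (simp add: r_def)
  have no_partial: "{k. is_partial j (snd t k)} = {}"
    using free by simp
  then have entries: "card {k. is_entry (snd t k)} = r"
    using card_is_entry_eq[of "snd t" j] by (simp add: r_def)
  have "expansion_weight is_entry b \<xi> g ((expansion_deriv j ^^ n) {#t#}) =
      expansion_weight (is_partial j) b \<xi> ((weight_step b j r ^^ n) (\<lambda>m. g (r - m))) {#t#}"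
    by (simp only: expansion_weight_entry_eq_partial[OF active_rows_expansion_deriv_pow[OF rows]]
        expansion_weight_expansion_deriv_pow[OF rows])
  also have "\<dots> = \<bar>fst t\<bar> * (derived_weight b \<xi> (snd t) * weight_transfer b j n g r)"
    unfolding expansion_weight_simps weight_def no_partial card.empty weight_step_pow_at_zero weight_transfer_def
    by simp
  also have "\<dots> = \<bar>fst t\<bar> * weight is_entry b \<xi> (weight_transfer b j n g) (snd t)"
    by (simp only: weight_def entries)
  finally show ?thesis .
qed

definition free_of :: "nat \<Rightarrow> 'n::finite monomial multiset \<Rightarrow> bool" where
  "free_of j L \<longleftrightarrow> (\<forall>t\<in>#L. \<forall>k. \<not> is_partial j (snd t k))"

lemma expansion_weight_deriv_pow_free:
  assumes "free_of j L"
  shows "expansion_weight is_entry b \<xi> g ((expansion_deriv j ^^ n) L) =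
           expansion_weight is_entry b \<xi> (weight_transfer b j n g) L"
  using assms
proof (induction L)
  case (add t L)
  have "(expansion_deriv j ^^ n) (add_mset t L) = (expansion_deriv j ^^ n) L + (expansion_deriv j ^^ n) {#t#}"
    by (subst add_mset_add_single) (rule expansion_deriv_pow_union)
  with add show ?case
    by (simp add: free_of_def expansion_weight_deriv_pow_monomial)
qed simp

lemma is_partial_factor_deriv: "is_partial i (factor_deriv j s) \<Longrightarrow> i = j"
  by (cases s) (auto split: if_splits)

lemma free_of_expansion_deriv_pow:
  assumes "free_of i L" and "i \<noteq> j"
  shows "free_of i ((expansion_deriv j ^^ n) L)"
proof (induction n)
  case (Suc n)
  then show ?case
    using assms(2) by (auto simp: free_of_def expansion_deriv_def monomial_deriv_def dest: is_partial_factor_deriv)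
qed (use assms(1) in simp)

lemma expansion_weight_foldr_deriv:
  assumes "distinct js" and "\<forall>i\<in>set js. free_of i L"
  shows "expansion_weight is_entry b \<xi> g (foldr (\<lambda>j. expansion_deriv j ^^ \<nu> j) js L) =
           expansion_weight is_entry b \<xi> (fold (\<lambda>j. weight_transfer b j (\<nu> j)) js g) L"
  using assms
proof (induction js arbitrary: g)
  case (Cons j js)
  have "free_of j (foldr (\<lambda>j. expansion_deriv j ^^ \<nu> j) js' L)" if "j \<notin> set js'" for js'
    using that Cons.prems(2) by (induction js') (auto intro: free_of_expansion_deriv_pow)
  then show ?case
    using Cons by (simp add: expansion_weight_deriv_pow_free)
qed simp

definition indices_below :: "(nat \<Rightarrow> nat) \<Rightarrow> nat set \<Rightarrow> (nat \<Rightarrow> nat) set" where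
  "indices_below \<nu> J = {w. (\<forall>i\<in>J. w i \<le> \<nu> i) \<and> (\<forall>i. i \<notin> J \<longrightarrow> w i = 0)}"

lemma indices_below_empty: "indices_below \<nu> {} = {\<lambda>_. 0}"
  by (auto simp: indices_below_def)

lemma sum_indices_below_insert:
  assumes j: "j \<notin> J"
  shows "(\<Sum>w\<in>indices_below \<nu> (insert j J). F w) = (\<Sum>w\<in>indices_below \<nu> J. \<Sum>m\<le>\<nu> j. F (w(j := m)))"
proof -
  let ?upd = "\<lambda>(m, w). w(j := m)"
  have image: "indices_below \<nu> (insert j J) = ?upd ` ({..\<nu> j} \<times> indices_below \<nu> J)"
  proof (intro equalityI subsetI)
    fix w assume "w \<in> indices_below \<nu> (insert j J)"
    then have "(w j, w(j := 0)) \<in> {..\<nu> j} \<times> indices_below \<nu> J" and "w = ?upd (w j, w(j := 0))"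
      using j by (auto simp: indices_below_def)
    then show "w \<in> ?upd ` ({..\<nu> j} \<times> indices_below \<nu> J)"
      by blast
  qed (use j in \<open>auto simp: indices_below_def\<close>)
  have "inj_on ?upd ({..\<nu> j} \<times> indices_below \<nu> J)"
  proof (rule inj_onI, clarify)
    fix m w m' w'
    assume w: "w \<in> indices_below \<nu> J" "w' \<in> indices_below \<nu> J" and eq: "w(j := m) = w'(j := m')"
    have "w i = w' i" for i
      using fun_cong[OF eq, of i] w j by (cases "i = j") (auto simp: indices_below_def)
    then show "m = m' \<and> w = w'"
      using fun_cong[OF eq, of j] by auto
  qed
  then have "(\<Sum>w\<in>indices_below \<nu> (insert j J). F w) = (\<Sum>(m, w)\<in>{..\<nu> j} \<times> indices_below \<nu> J. F (w(j := m)))"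
    unfolding image by (simp add: sum.reindex case_prod_beta')
  also have "\<dots> = (\<Sum>w\<in>indices_below \<nu> J. \<Sum>m\<le>\<nu> j. F (w(j := m)))"
    by (subst sum.cartesian_product[symmetric]) (rule sum.swap)
  finally show ?thesis .
qed

lemma fold_weight_transfer_eq:
  assumes "distinct js"
  shows "fold (\<lambda>j. weight_transfer b j (\<nu> j)) js g f =
    (2 * pi) ^ (\<Sum>i\<in>set js. \<nu> i) *
    (\<Sum>w\<in>indices_below \<nu> (set js). real (ffact f (\<Sum>i\<in>set js. w i)) *
        (\<Prod>i\<in>set js. real (Stirling (\<nu> i) (w i)) * b i ^ w i) * g (f - (\<Sum>i\<in>set js. w i)))"
  using assms
proof (induction js arbitrary: g)
  case Nil
  then show ?case
    by (simp add: indices_below_empty)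
next
  case (Cons j js)
  define J where "J = set js"
  have j: "j \<notin> J"
    using Cons.prems by (simp add: J_def)
  define F where "F w = real (ffact f (\<Sum>i\<in>insert j J. w i)) *
      (\<Prod>i\<in>insert j J. real (Stirling (\<nu> i) (w i)) * b i ^ w i) * g (f - (\<Sum>i\<in>insert j J. w i))" for w
  have F_upd: "F (w(j := m)) = real (ffact f (\<Sum>i\<in>J. w i)) * (\<Prod>i\<in>J. real (Stirling (\<nu> i) (w i)) * b i ^ w i) *
      (real (ffact (f - (\<Sum>i\<in>J. w i)) m) * real (Stirling (\<nu> j) m) * b j ^ m * g (f - (\<Sum>i\<in>J. w i) - m))" for w m
  proof -
    have "(\<Sum>i\<in>J. (w(j := m)) i) = (\<Sum>i\<in>J. w i)"
      and "(\<Prod>i\<in>J. real (Stirling (\<nu> i) ((w(j := m)) i)) * b i ^ (w(j := m)) i) =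
             (\<Prod>i\<in>J. real (Stirling (\<nu> i) (w i)) * b i ^ w i)"
      using j by (auto intro!: sum.cong prod.cong)
    then have "(\<Sum>i\<in>insert j J. (w(j := m)) i) = m + (\<Sum>i\<in>J. w i)"
      and "(\<Prod>i\<in>insert j J. real (Stirling (\<nu> i) ((w(j := m)) i)) * b i ^ (w(j := m)) i) =
             real (Stirling (\<nu> j) m) * b j ^ m * (\<Prod>i\<in>J. real (Stirling (\<nu> i) (w i)) * b i ^ w i)"
      using j by (simp_all add: J_def)
    then show ?thesis
      using ffact_add[of f "\<Sum>i\<in>J. w i" m]
      by (simp add: F_def diff_diff_add add.commute flip: of_nat_mult)
  qed
  have "fold (\<lambda>j. weight_transfer b j (\<nu> j)) (j # js) g f =
      (2 * pi) ^ (\<Sum>i\<in>J. \<nu> i) * (\<Sum>w\<in>indices_below \<nu> J. real (ffact f (\<Sum>i\<in>J. w i)) *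
        (\<Prod>i\<in>J. real (Stirling (\<nu> i) (w i)) * b i ^ w i) * weight_transfer b j (\<nu> j) g (f - (\<Sum>i\<in>J. w i)))"
    using Cons by (simp add: J_def)
  also have "\<dots> = (2 * pi) ^ (\<Sum>i\<in>J. \<nu> i) * (2 * pi) ^ \<nu> j * (\<Sum>w\<in>indices_below \<nu> J. \<Sum>m\<le>\<nu> j. F (w(j := m)))"
    by (simp add: weight_transfer_def F_upd sum_distrib_left mult_ac)
  also have "\<dots> = (2 * pi) ^ (\<Sum>i\<in>insert j J. \<nu> i) * (\<Sum>w\<in>indices_below \<nu> (insert j J). F w)"
    using j by (simp add: sum_indices_below_insert power_add J_def mult_ac)
  finally show ?case
    by (simp add: F_def J_def)
qed

lemma fold_weight_transfer_le:
  fixes \<xi> :: real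
  assumes "distinct js" and "\<xi> \<ge> 0" and "\<And>i. b i \<ge> 0"
  shows "fold (\<lambda>j. weight_transfer b j (\<nu> j)) js (\<lambda>f. (1 + \<xi>) ^ f) d \<le>
    (2 + \<xi>) ^ d * (2 * pi) ^ (\<Sum>i\<in>set js. \<nu> i) *
    (\<Sum>w\<in>indices_below \<nu> (set js). fact (\<Sum>i\<in>set js. w i) * (\<Prod>i\<in>set js. real (Stirling (\<nu> i) (w i)) * b i ^ w i))"
proof -
  have "real (ffact d (\<Sum>i\<in>set js. w i)) * Q * (1 + \<xi>) ^ (d - (\<Sum>i\<in>set js. w i)) \<le>
      (2 + \<xi>) ^ d * (fact (\<Sum>i\<in>set js. w i) * Q)" if "Q \<ge> 0" for w Q
    using mult_right_mono[OF ffact_mult_power_le[OF assms(2)] that] by (simp add: mult_ac)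
  moreover have "(\<Prod>i\<in>set js. real (Stirling (\<nu> i) (w i)) * b i ^ w i) \<ge> 0" for w
    using assms(3) by (intro prod_nonneg) simp
  ultimately show ?thesis
    unfolding fold_weight_transfer_eq[OF assms(1)] mult.assoc sum_distrib_left
    by (intro mult_left_mono sum_mono) auto
qed


lemma indices_below_mi_supp: "indices_below \<nu> (mi_supp \<nu>) = {w. \<forall>j. w j \<le> \<nu> j}"
  by (auto simp: indices_below_def mi_supp_def) (metis le0 not_gr_zero, metis le_zero_eq)

lemma
  assumes "finite (mi_supp \<nu>)" and "\<forall>j. w j \<le> \<nu> j"
  shows sum_mi_supp_eq_mi_abs: "(\<Sum>i\<in>mi_supp \<nu>. w i) = mi_abs w"
    and prod_mi_supp_eq_mi_pow: "(\<Prod>i\<in>mi_supp \<nu>. b i ^ w i) = mi_pow b w"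
proof -
  have sub: "mi_supp w \<subseteq> mi_supp \<nu>"
    using assms(2) by (auto simp: mi_supp_def intro: less_le_trans)
  show "(\<Sum>i\<in>mi_supp \<nu>. w i) = mi_abs w"
    unfolding mi_abs_def by (rule sum.mono_neutral_right[OF assms(1) sub]) (auto simp: mi_supp_def)
  show "(\<Prod>i\<in>mi_supp \<nu>. b i ^ w i) = mi_pow b w"
    unfolding mi_pow_def by (rule prod.mono_neutral_right[OF assms(1) sub]) (auto simp: mi_supp_def)
qed

theorem abs_pderiv_multi_det_pert_le:
  fixes \<alpha> :: "'n::finite \<Rightarrow> 'n \<Rightarrow> nat \<Rightarrow> real"
  assumes b: "summable b" "\<And>i. b i \<ge> 0" and ab: "\<And>k l i. \<bar>\<alpha> k l i\<bar> \<le> b i"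
    and \<nu>: "finite (mi_supp \<nu>)"
  shows "\<bar>pderiv_multi \<nu> (\<lambda>z. det (\<chi> k l. pert_entry \<alpha> k l z)) y\<bar> \<le>
    fact CARD('n) * (2 + suminf b) ^ CARD('n) * (2 * pi) ^ mi_abs \<nu> *
    (\<Sum>w\<in>{w. \<forall>j. w j \<le> \<nu> j}. fact (mi_abs w) * mi_pow b w * (\<Prod>i\<in>mi_supp \<nu>. real (Stirling (\<nu> i) (w i))))"
proof -
  define js where "js = sorted_list_of_set (mi_supp \<nu>)"
  define \<xi> where "\<xi> = suminf b"
  define L where "L = (det_expansion :: 'n monomial multiset)"
  have js: "distinct js" "set js = mi_supp \<nu>"
    using \<nu> by (simp_all add: js_def)
  have \<xi>: "\<xi> \<ge> 0"
    unfolding \<xi>_def using b by (rule suminf_nonneg)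
  have free: "\<forall>i\<in>set js. free_of i L"
    by (auto simp: free_of_def L_def det_expansion_def)
  have "\<bar>pderiv_multi \<nu> (\<lambda>z. det (\<chi> k l. pert_entry \<alpha> k l z)) y\<bar> = \<bar>expansion_val \<alpha> (expansion_deriv_multi \<nu> L) y\<bar>"
    by (simp add: det_pert_matrix_eq_expansion_val L_def pderiv_multi_expansion_val[OF b(1) ab])
  also have "\<dots> \<le> expansion_weight is_entry b \<xi> (\<lambda>f. (1 + \<xi>) ^ f) (expansion_deriv_multi \<nu> L)"
    unfolding \<xi>_def using b(1) ab by (rule abs_expansion_val_le_expansion_weight)
  also have "\<dots> = fact CARD('n) * fold (\<lambda>j. weight_transfer b j (\<nu> j)) js (\<lambda>f. (1 + \<xi>) ^ f) CARD('n)"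
    by (simp only: expansion_deriv_multi_def js_def[symmetric] expansion_weight_foldr_deriv[OF js(1) free])
      (simp add: L_def expansion_weight_det_expansion)
  also have "\<dots> \<le> fact CARD('n) * ((2 + \<xi>) ^ CARD('n) * (2 * pi) ^ (\<Sum>i\<in>set js. \<nu> i) *
      (\<Sum>w\<in>indices_below \<nu> (set js). fact (\<Sum>i\<in>set js. w i) * (\<Prod>i\<in>set js. real (Stirling (\<nu> i) (w i)) * b i ^ w i)))"
    by (intro mult_left_mono fold_weight_transfer_le js \<xi> b) simp
  also have "\<dots> = fact CARD('n) * (2 + \<xi>) ^ CARD('n) * (2 * pi) ^ mi_abs \<nu> *
    (\<Sum>w\<in>{w. \<forall>j. w j \<le> \<nu> j}. fact (mi_abs w) * mi_pow b w * (\<Prod>i\<in>mi_supp \<nu>. real (Stirling (\<nu> i) (w i))))"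
    unfolding js(2) indices_below_mi_supp mi_abs_def[of \<nu>, symmetric]
    by (auto simp: prod.distrib sum_mi_supp_eq_mi_abs[OF \<nu>] prod_mi_supp_eq_mi_pow[OF \<nu>] mult_ac intro!: sum.cong)
  finally show ?thesis
    by (simp add: \<xi>_def)
qed

section \<open>The Jacobian of the domain mapping\<close>

lemma AE_le_imp_le_on_open:
  fixes f :: "'a::euclidean_space \<Rightarrow> real"
  assumes D: "open D" and f: "continuous_on D f" and ae: "AE x in lebesgue_on D. f x \<le> c"
  shows "\<forall>x\<in>D. f x \<le> c"
proof (rule ccontr)
  assume "\<not> (\<forall>x\<in>D. f x \<le> c)"
  then obtain x0 where x0: "x0 \<in> D" "c < f x0"
    by (auto simp: not_le)
  define U where "U = f -` {c<..} \<inter> D"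
  have U: "open U"
    using continuous_on_open_vimage[OF D, of f] f open_greaterThan[of c] unfolding U_def by blast
  have "x0 \<in> U"
    using x0 by (simp add: U_def)
  then obtain r where r: "r > 0" "ball x0 r \<subseteq> U"
    using U open_contains_ball by blast
  have "D \<inter> space lebesgue \<in> sets lebesgue"
    using D by simp
  from AE_restrict_space_iff[OF this] ae have "AE x in lebesgue. x \<in> D \<longrightarrow> f x \<le> c"
    by simp
  then have "AE x in lborel. x \<in> D \<longrightarrow> f x \<le> c"
    by (simp add: AE_completion_iff)
  moreover have "{x \<in> space lborel. \<not> (x \<in> D \<longrightarrow> f x \<le> c)} = U"
    by (auto simp: U_def not_le)
  moreover have "U \<in> sets lborel"
    using U by simp
  ultimately have "emeasure lborel U = 0"
    using AE_iff_measurable[of U lborel "\<lambda>x. x \<in> D \<longrightarrow> f x \<le> c"] by simp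
  moreover have "emeasure lborel (ball x0 r) \<le> emeasure lborel U"
    using r U by (intro emeasure_mono) auto
  ultimately have "measure lborel (ball x0 r) = 0"
    by (simp add: measure_def)
  with content_ball_pos[OF r(1), of x0] show False
    by simp
qed

lemma abs_matrix_entry_le_spec_norm: "\<bar>(A :: real^'n^'m) $ k $ l\<bar> \<le> spec_norm A"
proof -
  have "\<bar>(A *v axis l 1) $ k\<bar> \<le> norm (A *v axis l 1)"
    by (rule component_le_norm_cart)
  also have "\<dots> \<le> onorm (\<lambda>v. A *v v) * norm (axis l (1::real))"
    by (rule onorm) simp
  finally show ?thesis
    by (simp add: spec_norm_def matrix_vector_mult_basis column_def)
qed

lemma continuous_on_jacobian_entry:
  fixes f :: "real^'n \<Rightarrow> real^'m"
  assumes "\<And>x. x \<in> S \<Longrightarrow> (f has_derivative f' x) (at x)" and "continuous_on S (\<lambda>x. f' x (axis l 1))"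
  shows "continuous_on S (\<lambda>x. jacobian f (at x) $ k $ l)"
proof -
  have "jacobian f (at x) $ k $ l = f' x (axis l 1) $ k" if "x \<in> S" for x
    using frechet_derivative_at[OF assms(1)[OF that]] by (simp add: jacobian_def matrix_def)
  moreover have "continuous_on S (\<lambda>x. f' x (axis l 1) $ k)"
    using assms(2) by (intro continuous_intros)
  ultimately show ?thesis
    by (metis (no_types, lifting) continuous_on_eq)
qed

lemma abs_jacobian_entry_le_W1inf:
  fixes f :: "real^'n \<Rightarrow> real^'n"
  assumes D: "open D" "D \<noteq> {}" and cont: "continuous_on D (\<lambda>x. jacobian f (at x) $ k $ l)"
    and fin: "W1inf D f < \<infinity>"
  shows "\<forall>x\<in>D. \<bar>jacobian f (at x) $ k $ l\<bar> \<le> real_of_ereal (W1inf D f)"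
proof -
  have "AE x in lebesgue_on D. ereal (spec_norm (jacobian f (at x))) \<le> Linf_on D (\<lambda>x. spec_norm (jacobian f (at x)))"
    unfolding Linf_on_def by (rule esssup_AE)
  moreover have "Linf_on D (\<lambda>x. spec_norm (jacobian f (at x))) \<le> W1inf D f"
    by (simp add: W1inf_def)
  ultimately have ae: "AE x in lebesgue_on D. ereal (spec_norm (jacobian f (at x))) \<le> W1inf D f"
    by (auto elim: eventually_mono)
  show ?thesis
  proof (cases "W1inf D f")
    case (real w)
    have "AE x in lebesgue_on D. \<bar>jacobian f (at x) $ k $ l\<bar> \<le> w"
      using ae real by (auto elim!: eventually_mono intro: order.trans[OF abs_matrix_entry_le_spec_norm])
    from AE_le_imp_le_on_open[OF D(1) continuous_on_rabs[OF cont] this] real show ?thesis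
      by simp
  next
    case MInf
    then have "AE x in lebesgue_on D. (\<lambda>_. 1 :: real) x \<le> 0"
      using ae by (auto elim!: eventually_mono)
    from AE_le_imp_le_on_open[OF D(1) continuous_on_const this] D(2) show ?thesis
      by auto
  qed (use fin in simp)
qed

lemma Vmap_single_coordinate: "Vmap psi x (\<lambda>m. if m = i then 1 / 4 else 0) = x + (1 / sqrt 6) *\<^sub>R psi i x"
proof -
  have "sin (2 * pi * (1 / 4 :: real)) = 1"
    by (simp add: mult.commute[of 2] divide_inverse[symmetric])
  then have "(\<lambda>m. sin (2 * pi * (if m = i then 1 / 4 else 0)) *\<^sub>R psi m x) = (\<lambda>m. if m = i then psi m x else 0)"
    by auto
  moreover have "(\<lambda>m. if m = i then psi m x else 0) sums psi i x"
    by (rule sums_single)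
  ultimately show ?thesis
    by (simp add: Vmap_def sums_iff)
qed

text \<open>Assumption (A2) at the parameter \<open>z = e\<^sub>i / 4\<close>, where \<open>V = id + \<psi>\<^sub>i / \<surd>6\<close>, makes
  \<open>\<psi>\<^sub>i'\<close> continuous.\<close>

lemma continuous_on_jacobian_psi:
  fixes psi :: "nat \<Rightarrow> real^'n \<Rightarrow> real^'n"
  assumes "C2_bounded_on (\<lambda>x. Vmap psi x (\<lambda>m. if m = i then 1 / 4 else 0)) D C"
  shows "continuous_on D (\<lambda>x. jacobian (psi i) (at x) $ k $ l)"
proof -
  obtain F' :: "real^'n \<Rightarrow> (real^'n) \<Rightarrow>\<^sub>L (real^'n)" where
      F': "\<And>x. x \<in> D \<Longrightarrow> ((\<lambda>x. Vmap psi x (\<lambda>m. if m = i then 1 / 4 else 0)) has_derivative F' x) (at x)"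
      and cont: "continuous_on D F'"
    using assms uniformly_continuous_imp_continuous unfolding C2_bounded_on_def by blast
  have psi: "psi i = (\<lambda>x. sqrt 6 *\<^sub>R (Vmap psi x (\<lambda>m. if m = i then 1 / 4 else 0) - x))"
    by (simp add: Vmap_single_coordinate)
  show ?thesis
  proof (rule continuous_on_jacobian_entry)
    show "(psi i has_derivative (\<lambda>h. sqrt 6 *\<^sub>R (F' x h - h))) (at x)" if "x \<in> D" for x
      by (subst psi) (auto intro!: derivative_eq_intros F' that)
    show "continuous_on D (\<lambda>x. sqrt 6 *\<^sub>R (F' x (axis l 1) - axis l 1))"
      by (intro continuous_intros cont)
  qed
qed

lemma Jmat_eq_pert_matrix:
  fixes psi :: "nat \<Rightarrow> real^'n \<Rightarrow> real^'n"
  assumes bd: "\<And>i k l. \<bar>jacobian (psi i) (at x) $ k $ l\<bar> \<le> c i" and c: "summable c"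
  shows "Jmat psi x z = (\<chi> k l. pert_entry (\<lambda>k l i. jacobian (psi i) (at x) $ k $ l / sqrt 6) k l z)"
proof -
  define S where "S i = sin (2 * pi * z i) *\<^sub>R jacobian (psi i) (at x)" for i
  have "norm (S i) \<le> real (CARD('n) * CARD('n)) * c i" for i
  proof -
    have "norm (S i) \<le> norm (jacobian (psi i) (at x))"
      by (simp add: S_def abs_sin_le_one mult_left_le_one_le)
    also have "\<dots> \<le> (\<Sum>k\<in>UNIV. norm (jacobian (psi i) (at x) $ k))"
      by (simp add: norm_vec_def L2_set_le_sum)
    also have "\<dots> \<le> (\<Sum>k\<in>UNIV. \<Sum>l\<in>UNIV. \<bar>jacobian (psi i) (at x) $ k $ l\<bar>)"
      by (intro sum_mono norm_le_l1_cart)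
    also have "\<dots> \<le> (\<Sum>k\<in>(UNIV :: 'n set). \<Sum>l\<in>(UNIV :: 'n set). c i)"
      by (intro sum_mono) (rule bd)
    finally show ?thesis
      by simp
  qed
  then have "summable S"
    by (intro summable_comparison_test'[OF summable_mult[OF c], of 0]) auto
  then have "(\<lambda>i. S i $ k $ l) sums ((\<Sum>i. S i) $ k $ l)" for k l
    by (intro sums_vec_nth summable_sums)
  then have "(\<lambda>i. sin (2 * pi * z i) * jacobian (psi i) (at x) $ k $ l) sums ((\<Sum>i. S i) $ k $ l)" for k l
    by (simp add: S_def)
  then have "(\<lambda>i. sin (2 * pi * z i) * jacobian (psi i) (at x) $ k $ l / sqrt 6) sums
      ((\<Sum>i. S i) $ k $ l / sqrt 6)" for k l
    by (rule sums_divide)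
  then show ?thesis
    by (simp add: vec_eq_iff Jmat_def pert_entry_def S_def mat_def sums_iff)
qed

lemma expansion_val_measurable:
  fixes \<alpha> :: "'a \<Rightarrow> 'n::finite \<Rightarrow> 'n \<Rightarrow> nat \<Rightarrow> real"
  assumes \<alpha>: "\<And>k l i. (\<lambda>x. \<alpha> x k l i) \<in> borel_measurable M"
  shows "(\<lambda>x. expansion_val (\<alpha> x) L y) \<in> borel_measurable M"
proof -
  have "(\<lambda>x. factor_val (\<alpha> x) k s y) \<in> borel_measurable M" for k s
  proof (cases s)
    case (Entry l)
    have "(\<lambda>x. \<Sum>i. sin (2 * pi * y i) * \<alpha> x k l i) \<in> borel_measurable M"
      by (intro borel_measurable_suminf borel_measurable_times borel_measurable_const \<alpha>)
    then show ?thesis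
      using Entry by (simp add: pert_entry_def)
  next
    case (Partial l j a)
    then show ?thesis
      by (simp, intro borel_measurable_times borel_measurable_const \<alpha>)
  qed simp
  then show ?thesis
    by (induction L) (simp_all add: monomial_val_def)
qed

lemma pderiv_multi_det_pert_measurable:
  fixes \<alpha> :: "'a \<Rightarrow> 'n::finite \<Rightarrow> 'n \<Rightarrow> nat \<Rightarrow> real"
  assumes \<alpha>: "\<And>k l i. (\<lambda>x. \<alpha> x k l i) \<in> borel_measurable M"
    and b: "summable b" and ab: "\<And>x k l i. x \<in> space M \<Longrightarrow> \<bar>\<alpha> x k l i\<bar> \<le> b i"
  shows "(\<lambda>x. pderiv_multi \<nu> (\<lambda>z. det (\<chi> k l. pert_entry (\<alpha> x) k l z)) y) \<in> borel_measurable M"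
proof -
  have "pderiv_multi \<nu> (\<lambda>z. det (\<chi> k l. pert_entry (\<alpha> x) k l z)) y =
      expansion_val (\<alpha> x) (expansion_deriv_multi \<nu> det_expansion) y" if "x \<in> space M" for x
    by (simp add: det_pert_matrix_eq_expansion_val pderiv_multi_expansion_val[OF b ab[OF that]])
  then show ?thesis
    by (subst measurable_cong) (auto intro: expansion_val_measurable[OF \<alpha>])
qed

lemma Linf_on_pderiv_multi_det_pert_le:
  fixes \<alpha> :: "real^'d \<Rightarrow> 'n::finite \<Rightarrow> 'n \<Rightarrow> nat \<Rightarrow> real"
  assumes D: "open D" and cont: "\<And>k l i. continuous_on D (\<lambda>x. \<alpha> x k l i)"
    and b: "summable b" "\<And>i. b i \<ge> 0" and ab: "\<And>x k l i. x \<in> D \<Longrightarrow> \<bar>\<alpha> x k l i\<bar> \<le> b i"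
    and \<nu>: "finite (mi_supp \<nu>)"
    and F: "\<And>x z. x \<in> D \<Longrightarrow> F x z = det (\<chi> k l. pert_entry (\<alpha> x) k l z)"
  shows "Linf_on D (\<lambda>x. \<bar>pderiv_multi \<nu> (F x) y\<bar>) \<le>
    ereal (fact CARD('n) * (2 + suminf b) ^ CARD('n) * (2 * pi) ^ mi_abs \<nu> *
      (\<Sum>w\<in>{w. \<forall>j. w j \<le> \<nu> j}. fact (mi_abs w) * mi_pow b w * (\<Prod>i\<in>mi_supp \<nu>. real (Stirling (\<nu> i) (w i)))))"
  unfolding Linf_on_def
proof (rule esssup_I)
  have F_eq: "F x = (\<lambda>z. det (\<chi> k l. pert_entry (\<alpha> x) k l z))" if "x \<in> space (lebesgue_on D)" for x
    using F that by auto
  have "(\<lambda>x. \<alpha> x k l i) \<in> borel_measurable (lebesgue_on D)" for k l i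
    using D by (intro continuous_imp_measurable_on_sets_lebesgue cont) auto
  then have "(\<lambda>x. ereal \<bar>pderiv_multi \<nu> (\<lambda>z. det (\<chi> k l. pert_entry (\<alpha> x) k l z)) y\<bar>)
      \<in> borel_measurable (lebesgue_on D)"
    by (intro borel_measurable_ereal borel_measurable_abs pderiv_multi_det_pert_measurable[where b = b] b)
      (auto intro: ab)
  then show "(\<lambda>x. ereal \<bar>pderiv_multi \<nu> (F x) y\<bar>) \<in> borel_measurable (lebesgue_on D)"
    by (subst measurable_cong) (auto simp: F_eq)
  show "AE x in lebesgue_on D. ereal \<bar>pderiv_multi \<nu> (F x) y\<bar> \<le>
    ereal (fact CARD('n) * (2 + suminf b) ^ CARD('n) * (2 * pi) ^ mi_abs \<nu> *
      (\<Sum>w\<in>{w. \<forall>j. w j \<le> \<nu> j}. fact (mi_abs w) * mi_pow b w * (\<Prod>i\<in>mi_supp \<nu>. real (Stirling (\<nu> i) (w i)))))"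
  proof (rule AE_I2)
    fix x assume "x \<in> space (lebesgue_on D)"
    then have x: "x \<in> D"
      by simp
    show "ereal \<bar>pderiv_multi \<nu> (F x) y\<bar> \<le> ereal (fact CARD('n) * (2 + suminf b) ^ CARD('n) * (2 * pi) ^ mi_abs \<nu> *
      (\<Sum>w\<in>{w. \<forall>j. w j \<le> \<nu> j}. fact (mi_abs w) * mi_pow b w * (\<Prod>i\<in>mi_supp \<nu>. real (Stirling (\<nu> i) (w i)))))"
      unfolding F[OF x] ereal_less_eq(3) by (rule abs_pderiv_multi_det_pert_le[OF b ab[OF x] \<nu>])
  qed
qed

text \<open>Only (A2), (A4) and openness of the domain are used; the estimate holds for every \<open>y\<close>.\<close>

theorem lemma3p2:
  fixes Dref :: "(real^'n) set" and psi :: "nat \<Rightarrow> real^'n \<Rightarrow> real^'n"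
    and smin smax :: real and y :: "nat \<Rightarrow> real" and \<nu> :: "nat \<Rightarrow> nat"
  assumes dim: "CARD('n) = 2 \<or> CARD('n) = 3"
    and dom: "bounded Dref" "lipschitz_domain Dref"
    and A1: "\<forall>z. (\<forall>i. z i \<in> {0..1}) \<longrightarrow> inj_on (\<lambda>x. Vmap psi x z) (closure Dref)"
    and A2: "\<exists>C. \<forall>z. (\<forall>i. z i \<in> {0..1}) \<longrightarrow>
               C2_bounded_on (\<lambda>x. Vmap psi x z) Dref C \<and>
               C2_bounded_on (inv_into (closure Dref) (\<lambda>x. Vmap psi x z)) ((\<lambda>x. Vmap psi x z) ` Dref) C"
    and A3: "0 < smin" "smin \<le> 1" "1 \<le> smax"
            "\<forall>x\<in>Dref. \<forall>z. (\<forall>i. z i \<in> {0..1}) \<longrightarrow>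
               (\<forall>s. singular_value (Jmat psi x z) s \<longrightarrow> smin \<le> s \<and> s \<le> smax)"
    and A4: "\<forall>i. W1inf Dref (psi i) < \<infinity>"
            "summable (\<lambda>i. real_of_ereal (W1inf Dref (psi i)))"
    and y: "\<forall>i. y i \<in> {0..1}"
    and nu: "finite {j. \<nu> j \<noteq> 0}"
  shows "Linf_on Dref (\<lambda>x. \<bar>pderiv_multi \<nu> (\<lambda>z. det (Jmat psi x z)) y\<bar>)
         \<le> ereal (fact CARD('n) * (2 + (\<Sum>i. bcoef Dref psi i)) ^ CARD('n) * (2 * pi) ^ mi_abs \<nu> *
              (\<Sum>w\<in>{w. \<forall>j. w j \<le> \<nu> j}. fact (mi_abs w) * mi_pow (bcoef Dref psi) w *
                  (\<Prod>i\<in>mi_supp \<nu>. real (Stirling (\<nu> i) (w i)))))"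
proof -
  define b where "b = bcoef Dref psi"
  define \<alpha> where "\<alpha> x = (\<lambda>k l i. jacobian (psi i) (at x) $ k $ l / sqrt 6)" for x
  obtain x0 where D: "open Dref" "x0 \<in> Dref"
    using dom(2) by (auto simp: lipschitz_domain_def)
  obtain C where C: "\<forall>z. (\<forall>i. z i \<in> {0..1}) \<longrightarrow> C2_bounded_on (\<lambda>x. Vmap psi x z) Dref C"
    using A2 by blast
  have cont: "continuous_on Dref (\<lambda>x. jacobian (psi i) (at x) $ k $ l)" for i k l
    by (rule continuous_on_jacobian_psi[of psi i Dref C]) (simp add: C)
  have jac: "\<bar>jacobian (psi i) (at x) $ k $ l\<bar> \<le> sqrt 6 * b i" if "x \<in> Dref" for x i k l
    using abs_jacobian_entry_le_W1inf[OF D(1) _ cont] A4(1) that by (auto simp: b_def bcoef_def)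
  then have ab: "\<bar>\<alpha> x k l i\<bar> \<le> b i" if "x \<in> Dref" for x i k l
    using that by (simp add: \<alpha>_def abs_div pos_divide_le_eq mult.commute)
  have b_summable: "summable b"
    unfolding b_def bcoef_def[abs_def] using A4(2) by (rule summable_divide)
  have b_nonneg: "b i \<ge> 0" for i
    using ab[OF D(2), of undefined undefined i] by linarith
  have "det (Jmat psi x z) = det (\<chi> k l. pert_entry (\<alpha> x) k l z)" if "x \<in> Dref" for x z
    using Jmat_eq_pert_matrix[OF jac[OF that] summable_mult[OF b_summable]] by (simp add: \<alpha>_def)
  moreover have "finite (mi_supp \<nu>)"
    using nu by (simp add: mi_supp_def)
  ultimately show ?thesis
    unfolding b_def[symmetric]
    by (intro Linf_on_pderiv_multi_det_pert_le[where \<alpha> = \<alpha>] D(1) b_summable b_nonneg ab)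
      (auto simp: \<alpha>_def intro: continuous_intros cont)
qed

end
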